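(* Let $\mathcal{F}$ be a complete pointed fan in $\mathbb{R}^2$ with $n\ge3$ regions and profile $\beta(\mathcal{F})=(\beta_0,\dots,\beta_{n-1})$. If $n$ is odd, then $\mathcal{F}$ is virtually inscribable and $\dim\mathrm{InSpc}(\mathcal{F})=1$. If $n$ is even, then $\mathcal{F}$ is virtually inscribable if and only if $\beta_0+\beta_2+\beta_4+\cdots+\beta_{n-2}=\pi$, and in this case $\dim\mathrm{InSpc}(\mathcal{F})=2$.
   Context: The regions $R_0,\dots,R_{n-1}$ of $\mathcal{F}$ are ordered counterclockwise, $\beta_i$ is the angle of $R_i$, and indices are taken modulo $n$. Adjacent regions $R_i,R_{i+1}$ share a ray; $s_{R_iR_{i+1}}$ is the reflection in the line spanned by that ray. For a walk $\mathcal{W}=R_{i_0}\cdots R_{i_k}$ in the cyclic adjacency graph set $t_{\mathcal{W}}=s_{R_{i_k}R_{i_{k-1}}}\cdots s_{R_{i_1}R_{i_0}}$. $\mathrm{InSpc}(\mathcal{F})$ denotes the based inscribed space $\{v\in\mathbb{R}^2: t_{\mathcal{W}}(v)=v$ for all closed walks $\mathcal{W}$ starting at $R_0\}$ (its dimension does not depend on the base region), and $\mathcal{F}$ is virtually inscribable if this space is nonzero. *)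

theory Defs
  imports "HOL-Analysis.Analysis"
begin

text \<open>A complete pointed fan in the plane with n regions is described by the angles
  th 0 < th 1 < ... < th (n-1) < th 0 + 2 pi of its rays, listed counterclockwise.
  Region R_i is the cone between ray i and ray (i+1) mod n; pointedness means every
  region has angle strictly less than pi.\<close>

definition ray_dir :: "(nat \<Rightarrow> real) \<Rightarrow> nat \<Rightarrow> real^2" where
  "ray_dir th i = vector [cos (th i), sin (th i)]"

definition fan_angle :: "nat \<Rightarrow> (nat \<Rightarrow> real) \<Rightarrow> nat \<Rightarrow> real" where
  "fan_angle n th i =
     (let k = i mod n in if Suc k < n then th (Suc k) - th k else th 0 + 2 * pi - th k)"

definition complete_pointed_fan :: "nat \<Rightarrow> (nat \<Rightarrow> real) \<Rightarrow> bool" where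
  "complete_pointed_fan n th \<longleftrightarrow>
     n \<ge> 1 \<and> (\<forall>i. Suc i < n \<longrightarrow> th i < th (Suc i)) \<and> th (n - 1) < th 0 + 2 * pi \<and>
     (\<forall>i<n. fan_angle n th i < pi)"

text \<open>Reflection in the line spanned by a unit vector u.\<close>
definition line_reflection :: "real^2 \<Rightarrow> real^2 \<Rightarrow> real^2" where
  "line_reflection u v = 2 *\<^sub>R (v \<bullet> u) *\<^sub>R u - v"

definition adjacent_regions :: "nat \<Rightarrow> nat \<Rightarrow> nat \<Rightarrow> bool" where
  "adjacent_regions n i j \<longleftrightarrow> i < n \<and> j < n \<and> (j = Suc i mod n \<or> i = Suc j mod n)"

definition shared_ray :: "nat \<Rightarrow> nat \<Rightarrow> nat \<Rightarrow> nat" where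
  "shared_ray n i j = (if j = Suc i mod n then j else i)"

definition region_reflection :: "nat \<Rightarrow> (nat \<Rightarrow> real) \<Rightarrow> nat \<Rightarrow> nat \<Rightarrow> real^2 \<Rightarrow> real^2" where
  "region_reflection n th i j = line_reflection (ray_dir th (shared_ray n i j))"

definition is_walk :: "nat \<Rightarrow> nat list \<Rightarrow> bool" where
  "is_walk n W \<longleftrightarrow> W \<noteq> [] \<and> (\<forall>i\<in>set W. i < n) \<and>
     (\<forall>k. Suc k < length W \<longrightarrow> adjacent_regions n (W ! k) (W ! Suc k))"

text \<open>t_W for W = R_{i_0} ... R_{i_k}: first apply s_{R_{i_1} R_{i_0}}, last s_{R_{i_k} R_{i_{k-1}}}.\<close>
fun walk_map :: "nat \<Rightarrow> (nat \<Rightarrow> real) \<Rightarrow> nat list \<Rightarrow> real^2 \<Rightarrow> real^2" where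
  "walk_map n th (a # b # rest) = walk_map n th (b # rest) \<circ> region_reflection n th b a"
| "walk_map n th _ = id"

definition InSpc :: "nat \<Rightarrow> (nat \<Rightarrow> real) \<Rightarrow> (real^2) set" where
  "InSpc n th = {v. \<forall>W. is_walk n W \<and> hd W = 0 \<and> last W = 0 \<longrightarrow> walk_map n th W v = v}"

definition virtually_inscribable :: "nat \<Rightarrow> (nat \<Rightarrow> real) \<Rightarrow> bool" where
  "virtually_inscribable n th \<longleftrightarrow> InSpc n th \<noteq> {0}"

end

theory Submission
  imports Defs
begin

text \<open>Label region \<open>R\<^sub>j\<close> by the image of \<open>v\<close> under the walk \<open>R\<^sub>0 R\<^sub>1 \<dots> R\<^sub>j\<close>. If the
  loop \<open>R\<^sub>0 R\<^sub>1 \<dots> R\<^sub>n\<^sub>-\<^sub>1 R\<^sub>0\<close> fixes \<open>v\<close>, these labels are compatible with every reflection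
  between adjacent regions, so every closed walk at \<open>R\<^sub>0\<close> fixes \<open>v\<close>; hence the inscribed
  space is the fixed space of that single loop. The loop is a product of \<open>n\<close> reflections in
  lines through the origin. For odd \<open>n\<close> it is a reflection, whose fixed space is a line. For
  even \<open>n\<close> it is the rotation by \<open>-2(\<beta>\<^sub>0 + \<beta>\<^sub>2 + \<dots> + \<beta>\<^sub>n\<^sub>-\<^sub>2)\<close>; as this sum of angles
  lies strictly between \<open>0\<close> and \<open>2\<pi>\<close>, the rotation is the identity exactly when the sum
  is \<open>\<pi>\<close>, and otherwise fixes only \<open>0\<close>.\<close>

text \<open>\<open>plane_isometry True a\<close> is the reflection in the line at angle \<open>a/2\<close>,
  \<open>plane_isometry False a\<close> the rotation by \<open>a\<close>.\<close>

definition plane_isometry :: "bool \<Rightarrow> real \<Rightarrow> real^2 \<Rightarrow> real^2" where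
  "plane_isometry reflect a v =
     (if reflect then vector [cos a * v$1 + sin a * v$2, sin a * v$1 - cos a * v$2]
      else vector [cos a * v$1 - sin a * v$2, sin a * v$1 + cos a * v$2])"

lemma vec2_eq_iff: "(x::real^2) = y \<longleftrightarrow> x$1 = y$1 \<and> x$2 = y$2"
  by (simp add: vec_eq_iff forall_2)

lemma plane_isometry_reflection_comp:
  "plane_isometry True a (plane_isometry b c v) = plane_isometry (\<not> b) (a - c) v"
  unfolding plane_isometry_def vec2_eq_iff
  by (cases b) (auto simp: cos_diff sin_diff algebra_simps)

lemma plane_isometry_rotation_0: "plane_isometry False 0 v = v"
  unfolding plane_isometry_def vec2_eq_iff by simp

lemma line_reflection_involutive:
  assumes "u \<bullet> u = 1"
  shows "line_reflection u (line_reflection u v) = v"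
  using assms unfolding line_reflection_def
  by (simp add: inner_diff_left algebra_simps scaleR_2)

lemma line_reflection_fixed_iff:
  assumes "u \<bullet> u = 1"
  shows "line_reflection u v = v \<longleftrightarrow> v \<in> span {u}"
proof
  assume "line_reflection u v = v"
  then have "2 *\<^sub>R ((v \<bullet> u) *\<^sub>R u) = 2 *\<^sub>R v"
    unfolding line_reflection_def by (metis diff_eq_eq scaleR_2 scaleR_scaleR)
  then show "v \<in> span {u}"
    by (metis scaleR_cancel_left span_base span_mul singletonI zero_neq_numeral)
next
  assume "v \<in> span {u}"
  then obtain c where "v = c *\<^sub>R u"
    by (auto simp: span_singleton)
  then show "line_reflection u v = v"
    using assms unfolding line_reflection_def
    by (simp flip: scaleR_left_diff_distrib)
qed

lemma unit_angle_inner_self: "vector [cos a, sin a] \<bullet> (vector [cos a, sin a] :: real^2) = 1"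
  using sin_cos_squared_add[of a] by (simp add: inner_vec_def sum_2 power2_eq_square)

lemma line_reflection_angle:
  "line_reflection (vector [cos a, sin a]) v = plane_isometry True (2 * a) v"
proof -
  have double: "cos (2 * a) = 2 * (cos a)^2 - 1" "sin (2 * a) = 2 * sin a * cos a"
    by (simp_all add: cos_double_cos sin_double)
  have sin_sq: "sin a * sin a = 1 - cos a * cos a"
    using sin_cos_squared_add[of a] unfolding power2_eq_square by linarith
  have pythagoras: "cos a * (cos a * z) + sin a * (sin a * z) = z" for z
  proof -
    have "cos a * (cos a * z) + sin a * (sin a * z) = ((sin a)^2 + (cos a)^2) * z"
      unfolding power2_eq_square by (simp only: algebra_simps)
    then show ?thesis
      by simp
  qed
  show ?thesis
    unfolding line_reflection_def plane_isometry_def vec2_eq_iff inner_vec_def sum_2 double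
    by (simp add: algebra_simps power2_eq_square sin_sq pythagoras)
qed

lemma fixed_points_reflection:
  "{v. plane_isometry True a v = v} = span {vector [cos (a/2), sin (a/2)]}"
proof -
  have "plane_isometry True a v = line_reflection (vector [cos (a/2), sin (a/2)]) v" for v
    using line_reflection_angle[of "a/2"] by simp
  then show ?thesis
    by (simp add: line_reflection_fixed_iff[OF unit_angle_inner_self])
qed

lemma fixed_points_rotation:
  "{v. plane_isometry False a v = v} = (if cos a = 1 then UNIV else {0})"
proof (cases "cos a = 1")
  case True
  then have "sin a = 0"
    using sin_cos_squared_add[of a] by simp
  with True have "plane_isometry False a v = v" for v
    by (simp add: plane_isometry_def vec2_eq_iff)
  with True show ?thesis
    by simp
next
  case False
  have "v = 0" if fixed: "plane_isometry False a v = v" for v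
  proof -
    have "(cos a - 1) * v$1 = sin a * v$2" "sin a * v$1 = - (cos a - 1) * v$2"
      using fixed unfolding plane_isometry_def vec2_eq_iff by (auto simp: algebra_simps)
    \<comment> \<open>\<open>(cos a - 1)^2 + (sin a)^2\<close> is the determinant of the rotation minus the identity\<close>
    then have "((cos a - 1)^2 + (sin a)^2) * v$1 = 0" "((cos a - 1)^2 + (sin a)^2) * v$2 = 0"
      by algebra+
    moreover have "(cos a - 1)^2 + (sin a)^2 \<noteq> 0"
      using False by (simp add: sum_power2_eq_zero_iff)
    ultimately show "v = 0"
      by (auto simp: vec2_eq_iff)
  qed
  moreover have "plane_isometry False a 0 = 0"
    by (simp add: plane_isometry_def vec2_eq_iff)
  ultimately have "{v. plane_isometry False a v = v} = {0}"
    by blast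
  with False show ?thesis
    by simp
qed

lemma line_reflection_ray_dir:
  "line_reflection (ray_dir th k) v = plane_isometry True (2 * th k) v"
  unfolding ray_dir_def by (rule line_reflection_angle)

lemma ray_dir_inner_self: "ray_dir th k \<bullet> ray_dir th k = 1"
  unfolding ray_dir_def by (rule unit_angle_inner_self)

lemma region_reflection_Suc_mod_back:
  "region_reflection n th i (Suc i mod n) = line_reflection (ray_dir th (Suc i mod n))"
  by (simp add: region_reflection_def shared_ray_def)

text \<open>For \<open>n = 2\<close> the two regions share both rays and \<^const>\<open>shared_ray\<close> picks the other
  one, hence the hypothesis \<open>n \<ge> 3\<close>.\<close>

lemma region_reflection_Suc_mod:
  assumes "n \<ge> 3" and "i < n"
  shows "region_reflection n th (Suc i mod n) i = line_reflection (ray_dir th (Suc i mod n))"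
proof -
  have "i \<noteq> Suc (Suc i mod n) mod n"
    using assms by (cases "Suc i < n"; cases "Suc (Suc i) < n") (auto simp: mod_Suc)
  then show ?thesis
    by (simp add: region_reflection_def shared_ray_def)
qed

primrec develop :: "(nat \<Rightarrow> real) \<Rightarrow> real^2 \<Rightarrow> nat \<Rightarrow> real^2" where
  "develop th v 0 = v"
| "develop th v (Suc j) = line_reflection (ray_dir th (Suc j)) (develop th v j)"

primrec alternating_angle :: "(nat \<Rightarrow> real) \<Rightarrow> nat \<Rightarrow> real" where
  "alternating_angle th 0 = 0"
| "alternating_angle th (Suc j) = 2 * th (Suc j) - alternating_angle th j"

lemma develop_eq_plane_isometry:
  "develop th v j = plane_isometry (odd j) (alternating_angle th j) v"
  by (induction j) (simp_all add: plane_isometry_rotation_0 line_reflection_ray_dir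
      plane_isometry_reflection_comp)

lemma alternating_angle_odd:
  "alternating_angle th (2 * m + 1) = 2 * (\<Sum>i<m+1. th (2 * i + 1) - th (2 * i)) + 2 * th 0"
proof (induction m)
  case (Suc m)
  have "2 * Suc m + 1 = Suc (Suc (2 * m + 1))"
    by simp
  then show ?case
    using Suc by simp
qed simp

definition closes_up :: "nat \<Rightarrow> (nat \<Rightarrow> real) \<Rightarrow> real^2 \<Rightarrow> bool" where
  "closes_up n th v \<longleftrightarrow> line_reflection (ray_dir th 0) (develop th v (n - 1)) = v"

lemma closes_up_iff:
  assumes "n \<ge> 1"
  shows "closes_up n th v \<longleftrightarrow>
           plane_isometry (odd n) (2 * th 0 - alternating_angle th (n - 1)) v = v"
proof -
  have "odd n \<longleftrightarrow> \<not> odd (n - 1)"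
    using assms by (cases n) auto
  then show ?thesis
    by (simp add: closes_up_def develop_eq_plane_isometry line_reflection_ray_dir
        plane_isometry_reflection_comp)
qed

lemma develop_Suc_mod:
  assumes "closes_up n th v" and "i < n"
  shows "line_reflection (ray_dir th (Suc i mod n)) (develop th v i) = develop th v (Suc i mod n)"
proof (cases "Suc i < n")
  case False
  then have "Suc i = n"
    using assms(2) by simp
  then have "i = n - 1" "Suc i mod n = 0"
    by auto
  then show ?thesis
    using assms(1) by (simp add: closes_up_def)
qed simp

lemma region_reflection_develop:
  assumes "n \<ge> 3" and "closes_up n th v" and "adjacent_regions n i j"
  shows "region_reflection n th j i (develop th v i) = develop th v j"
  using assms(3) unfolding adjacent_regions_def
proof (elim conjE disjE)
  assume "i < n" "j = Suc i mod n"
  then show ?thesis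
    using develop_Suc_mod[OF assms(2)] region_reflection_Suc_mod[OF assms(1)]
    by simp
next
  assume "j < n" "i = Suc j mod n"
  then show ?thesis
    using develop_Suc_mod[OF assms(2), of j, symmetric]
    by (simp add: region_reflection_Suc_mod_back line_reflection_involutive ray_dir_inner_self)
qed

lemma is_walk_Cons_Cons:
  "is_walk n (i # j # W) \<longleftrightarrow> adjacent_regions n i j \<and> is_walk n (j # W)"
proof -
  have all_nat: "(\<forall>k. P k) \<longleftrightarrow> P 0 \<and> (\<forall>k. P (Suc k))" for P :: "nat \<Rightarrow> bool"
    by (metis not0_implies_Suc)
  have "(\<forall>k. Suc k < length (i # j # W) \<longrightarrow>
          adjacent_regions n ((i # j # W) ! k) ((i # j # W) ! Suc k))
    \<longleftrightarrow> adjacent_regions n i j \<and>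
        (\<forall>k. Suc k < length (j # W) \<longrightarrow> adjacent_regions n ((j # W) ! k) ((j # W) ! Suc k))"
    by (subst all_nat) simp
  then show ?thesis
    unfolding is_walk_def by (auto simp: adjacent_regions_def)
qed

lemma walk_map_develop:
  assumes "n \<ge> 3" and "closes_up n th v" and "is_walk n W"
  shows "walk_map n th W (develop th v (hd W)) = develop th v (last W)"
  using assms(3)
proof (induction W rule: induct_list012)
  case (3 i j W)
  then show ?case
    by (simp add: is_walk_Cons_Cons region_reflection_develop[OF assms(1,2)])
qed (simp_all add: is_walk_def)

lemma walk_map_append2:
  "walk_map n th (W @ [i, j]) v = region_reflection n th j i (walk_map n th (W @ [i]) v)"
proof (induction W arbitrary: v)
  case (Cons k W)
  then show ?case
    by (cases W) simp_all
qed simp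

lemma walk_map_upt:
  assumes "n \<ge> 3"
  shows "j < n \<Longrightarrow> walk_map n th [0..<Suc j] v = develop th v j"
proof (induction j)
  case (Suc j)
  have "walk_map n th [0..<Suc (Suc j)] v
      = region_reflection n th (Suc j) j (walk_map n th [0..<Suc j] v)"
    using walk_map_append2[of n th "[0..<j]" j "Suc j" v] by simp
  also have "\<dots> = line_reflection (ray_dir th (Suc j)) (develop th v j)"
    using Suc region_reflection_Suc_mod[OF assms, of j th] by simp
  finally show ?case
    by simp
qed simp

lemma is_walk_around:
  assumes "n \<ge> 1"
  shows "is_walk n ([0..<n] @ [0])"
  unfolding is_walk_def
proof (intro conjI allI impI)
  show "\<forall>i\<in>set ([0..<n] @ [0]). i < n"
    using assms by auto
  fix k
  assume "Suc k < length ([0..<n] @ [0])"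
  then have "k < n"
    by simp
  then consider "Suc k < n" | "Suc k = n"
    by linarith
  then show "adjacent_regions n (([0..<n] @ [0]) ! k) (([0..<n] @ [0]) ! Suc k)"
    by cases (auto simp: adjacent_regions_def nth_append)
qed simp

lemma InSpc_eq_closes_up:
  assumes "n \<ge> 3"
  shows "InSpc n th = {v. closes_up n th v}"
proof (intro set_eqI iffI)
  fix v
  assume "v \<in> InSpc n th"
  moreover have "is_walk n ([0..<n] @ [0])" "hd ([0..<n] @ [0]) = 0" "last ([0..<n] @ [0]) = 0"
    using assms by (simp_all add: is_walk_around)
  ultimately have "walk_map n th ([0..<n] @ [0]) v = v"
    unfolding InSpc_def by blast
  moreover have
    "walk_map n th ([0..<n] @ [0]) v = region_reflection n th 0 (n - 1) (walk_map n th [0..<n] v)"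
    using walk_map_append2[of n th "[0..<n - 1]" "n - 1" 0 v] assms by (cases n) simp_all
  moreover have "walk_map n th [0..<n] v = develop th v (n - 1)"
    using walk_map_upt[OF assms, of "n - 1"] assms by simp
  moreover have "region_reflection n th 0 (n - 1) = line_reflection (ray_dir th 0)"
    using region_reflection_Suc_mod[OF assms, of "n - 1" th] assms by simp
  ultimately show "v \<in> {v. closes_up n th v}"
    by (simp add: closes_up_def)
next
  fix v
  assume "v \<in> {v. closes_up n th v}"
  then have "walk_map n th W v = v" if "is_walk n W" "hd W = 0" "last W = 0" for W
    using walk_map_develop[OF assms _ \<open>is_walk n W\<close>] that by simp
  then show "v \<in> InSpc n th"
    unfolding InSpc_def by blast
qed

lemma fan_angle_pos:
  assumes "complete_pointed_fan n th"
  shows "0 < fan_angle n th i"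
proof -
  have n: "n \<ge> 1" and inc: "\<And>k. Suc k < n \<Longrightarrow> th k < th (Suc k)"
    and last: "th (n - 1) < th 0 + 2 * pi"
    using assms unfolding complete_pointed_fan_def by auto
  show ?thesis
  proof (cases "Suc (i mod n) < n")
    case False
    moreover have "i mod n < n"
      using n by simp
    ultimately have "i mod n = n - 1"
      by linarith
    with False last show ?thesis
      by (simp add: fan_angle_def)
  qed (simp add: fan_angle_def Let_def inc)
qed

lemma sum_fan_angle:
  assumes "complete_pointed_fan n th"
  shows "(\<Sum>i<n. fan_angle n th i) = 2 * pi"
proof -
  have "Suc 0 \<le> n"
    using assms by (simp add: complete_pointed_fan_def)
  then obtain m where n: "n = Suc m"
    using Suc_le_D by blast
  have "fan_angle n th i = th (Suc i) - th i" if "i < m" for i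
    using that by (simp add: fan_angle_def Let_def n)
  moreover have "fan_angle n th m = th 0 + 2 * pi - th m"
    by (simp add: fan_angle_def Let_def n)
  ultimately have
    "(\<Sum>i<n. fan_angle n th i) = (\<Sum>i<m. th (Suc i) - th i) + (th 0 + 2 * pi - th m)"
    unfolding n sum.lessThan_Suc by simp
  also have "\<dots> = 2 * pi"
    by (simp add: sum_lessThan_telescope)
  finally show ?thesis .
qed

lemma sum_lessThan_even_odd:
  fixes f :: "nat \<Rightarrow> 'a::comm_monoid_add"
  shows "(\<Sum>i<2 * m. f i) = (\<Sum>i<m. f (2 * i)) + (\<Sum>i<m. f (2 * i + 1))"
  by (induction m) (simp_all add: algebra_simps)

lemma even_fan_angle_sum_bounds:
  assumes "complete_pointed_fan n th" and "n \<ge> 3" and "even n"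
  shows "0 < (\<Sum>i<n div 2. fan_angle n th (2 * i))"
    and "(\<Sum>i<n div 2. fan_angle n th (2 * i)) < 2 * pi"
proof -
  have nonempty: "{..<n div 2} \<noteq> {}"
    using assms(2) by (simp add: lessThan_empty_iff)
  then show "0 < (\<Sum>i<n div 2. fan_angle n th (2 * i))"
    by (intro sum_pos) (simp_all add: fan_angle_pos[OF assms(1)])
  have "0 < (\<Sum>i<n div 2. fan_angle n th (2 * i + 1))"
    using nonempty by (intro sum_pos) (simp_all add: fan_angle_pos[OF assms(1)])
  moreover have "(\<Sum>i<n div 2. fan_angle n th (2 * i)) + (\<Sum>i<n div 2. fan_angle n th (2 * i + 1))
      = 2 * pi"
    using sum_fan_angle[OF assms(1)] sum_lessThan_even_odd[of "fan_angle n th" "n div 2"] assms(3)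
    by simp
  ultimately show "(\<Sum>i<n div 2. fan_angle n th (2 * i)) < 2 * pi"
    by linarith
qed

lemma cos_double_eq_1_iff:
  assumes "0 < x" and "x < 2 * pi"
  shows "cos (2 * x) = 1 \<longleftrightarrow> x = pi"
proof
  assume "cos (2 * x) = 1"
  then obtain k :: int where "2 * x = of_int k * 2 * pi"
    using cos_one_2pi_int by blast
  then have x: "x = of_int k * pi"
    by simp
  then have "0 < k" "k < 2"
    using assms by (simp_all add: zero_less_mult_iff)
  then have "k = 1"
    by linarith
  then show "x = pi"
    using x by simp
qed simp

lemma InSpc_eq_fixed_points:
  assumes "n \<ge> 3"
  shows "InSpc n th = {v. plane_isometry (odd n) (2 * th 0 - alternating_angle th (n - 1)) v = v}"
  using assms by (simp add: InSpc_eq_closes_up closes_up_iff)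

lemma InSpc_odd:
  assumes "n \<ge> 3" and "odd n"
  obtains u where "u \<noteq> 0" and "InSpc n th = span {u}"
proof
  define a where "a = (2 * th 0 - alternating_angle th (n - 1)) / 2"
  show "InSpc n th = span {vector [cos a, sin a]}"
    using assms fixed_points_reflection unfolding InSpc_eq_fixed_points[OF assms(1)] a_def
    by simp
  show "vector [cos a, sin a] \<noteq> (0 :: real^2)"
    using unit_angle_inner_self[of a] by auto
qed

lemma InSpc_even:
  assumes "complete_pointed_fan n th" and "n \<ge> 3" and "even n"
  shows "InSpc n th = (if (\<Sum>i<n div 2. fan_angle n th (2 * i)) = pi then UNIV else {0})"
proof -
  define S where "S = (\<Sum>i<n div 2. fan_angle n th (2 * i))"
  obtain k where k: "n = 2 * k"
    using assms(3) by blast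
  define m where "m = k - 1"
  have m: "n div 2 = m + 1" and n: "n - 1 = 2 * m + 1"
    using assms(2) unfolding k m_def by simp_all
  have "S = (\<Sum>i<m + 1. th (2 * i + 1) - th (2 * i))"
    unfolding S_def m using n by (intro sum.cong) (auto simp: fan_angle_def Let_def)
  then have "2 * th 0 - alternating_angle th (n - 1) = - (2 * S)"
    unfolding n alternating_angle_odd by simp
  then have "InSpc n th = (if cos (2 * S) = 1 then UNIV else {0})"
    using assms(3) by (simp add: InSpc_eq_fixed_points[OF assms(2)] fixed_points_rotation)
  then show ?thesis
    using cos_double_eq_1_iff even_fan_angle_sum_bounds[OF assms] unfolding S_def by simp
qed

theorem proposition3p1:
  fixes n :: nat and th :: "nat \<Rightarrow> real"
  assumes "complete_pointed_fan n th" and "n \<ge> 3"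
  shows "(odd n \<longrightarrow> virtually_inscribable n th \<and> dim (InSpc n th) = 1) \<and>
         (even n \<longrightarrow>
            (virtually_inscribable n th \<longleftrightarrow> (\<Sum>i<n div 2. fan_angle n th (2 * i)) = pi) \<and>
            (virtually_inscribable n th \<longrightarrow> dim (InSpc n th) = 2))"
proof (intro conjI impI)
  assume "odd n"
  then obtain u where "u \<noteq> 0" and line: "InSpc n th = span {u}"
    using InSpc_odd[OF assms(2)] by blast
  then have "u \<in> InSpc n th"
    by (simp add: span_base)
  with \<open>u \<noteq> 0\<close> show "virtually_inscribable n th"
    unfolding virtually_inscribable_def by blast
  show "dim (InSpc n th) = 1"
    using \<open>u \<noteq> 0\<close> by (simp add: line)
next
  assume "even n"
  then have InSpc: "InSpc n th = (if (\<Sum>i<n div 2. fan_angle n th (2 * i)) = pi then UNIV else {0})"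
    using InSpc_even[OF assms] by blast
  have "(UNIV :: (real^2) set) \<noteq> {0}"
    using UNIV_not_singleton by blast
  then show "virtually_inscribable n th \<longleftrightarrow> (\<Sum>i<n div 2. fan_angle n th (2 * i)) = pi"
    unfolding virtually_inscribable_def InSpc by simp
  then show "virtually_inscribable n th \<Longrightarrow> dim (InSpc n th) = 2"
    unfolding InSpc by simp
qed

end
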